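(* For every $m\geq 2$, the Heisenberg Lie algebra $H(m)$ is not $2$-capable.
   Context: All Lie algebras are over a fixed field. The Heisenberg Lie algebra $H(m)$ is the Lie algebra of dimension $2m+1$ with $H(m)^2=Z(H(m))$ and $\dim H(m)^2=1$. A Lie algebra $L$ is $2$-capable if $L\cong H/Z_2(H)$ for some Lie algebra $H$, where $Z_2(H)$ is the second term of the upper central series of $H$. *)

theory Defs
  imports Main "HOL.Vector_Spaces"
begin

definition lie_algebra :: "('k::field \<Rightarrow> 'v::ab_group_add \<Rightarrow> 'v) \<Rightarrow> ('v \<Rightarrow> 'v \<Rightarrow> 'v) \<Rightarrow> bool" where
  "lie_algebra sc br \<longleftrightarrow>
     Vector_Spaces.vector_space sc \<and>
     (\<forall>x y z. br (x + y) z = br x z + br y z) \<and>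
     (\<forall>x y z. br x (y + z) = br x y + br x z) \<and>
     (\<forall>a x y. br (sc a x) y = sc a (br x y)) \<and>
     (\<forall>a x y. br x (sc a y) = sc a (br x y)) \<and>
     (\<forall>x. br x x = 0) \<and>
     (\<forall>x y z. br x (br y z) + br y (br z x) + br z (br x y) = 0)"

definition lie_center :: "('v \<Rightarrow> 'v \<Rightarrow> 'v::zero) \<Rightarrow> 'v set" where
  "lie_center br = {z. \<forall>x. br z x = 0}"

definition lie_center2 :: "('v \<Rightarrow> 'v \<Rightarrow> 'v::zero) \<Rightarrow> 'v set" where
  "lie_center2 br = {z. \<forall>x. br z x \<in> lie_center br}"

definition lie_derived :: "('k::field \<Rightarrow> 'v::ab_group_add \<Rightarrow> 'v) \<Rightarrow> ('v \<Rightarrow> 'v \<Rightarrow> 'v) \<Rightarrow> 'v set" where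
  "lie_derived sc br = module.span sc {br x y | x y. True}"

definition lie_hom :: "('k::field \<Rightarrow> 'h::ab_group_add \<Rightarrow> 'h) \<Rightarrow> ('h \<Rightarrow> 'h \<Rightarrow> 'h)
    \<Rightarrow> ('k \<Rightarrow> 'v::ab_group_add \<Rightarrow> 'v) \<Rightarrow> ('v \<Rightarrow> 'v \<Rightarrow> 'v) \<Rightarrow> ('h \<Rightarrow> 'v) \<Rightarrow> bool" where
  "lie_hom scH brH scL brL f \<longleftrightarrow>
     Vector_Spaces.linear scH scL f \<and> (\<forall>x y. f (brH x y) = brL (f x) (f y))"

text \<open>(H, f) witnesses that L is 2-capable: H is a Lie algebra and f : H \<rightarrow> L is a
  surjective Lie homomorphism with kernel Z_2(H), i.e. L \<cong> H/Z_2(H)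
  (first isomorphism theorem).  L is 2-capable iff such a witness exists
  for some Lie algebra H over the same field.\<close>
definition two_capable_witness :: "('k::field \<Rightarrow> 'h::ab_group_add \<Rightarrow> 'h) \<Rightarrow> ('h \<Rightarrow> 'h \<Rightarrow> 'h)
    \<Rightarrow> ('k \<Rightarrow> 'v::ab_group_add \<Rightarrow> 'v) \<Rightarrow> ('v \<Rightarrow> 'v \<Rightarrow> 'v) \<Rightarrow> ('h \<Rightarrow> 'v) \<Rightarrow> bool" where
  "two_capable_witness scH brH scL brL f \<longleftrightarrow>
     lie_algebra scH brH \<and> lie_hom scH brH scL brL f \<and> surj f \<and>
     {x. f x = 0} = lie_center2 brH"

end

theory Submission
  imports Defs
begin

text \<open>Let z span L^2 = Z(L) and let f : H \<rightarrow> L be onto with kernel Z_2(H).  As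
  dim L \<ge> 5, there are a, b, c, d with [a,b] = [c,d] = z and c, d centralizing a
  and b.  Lift them to x1, y1, x2, y2 and put p = [x1,y1], so p - [x2,y2] \<in> Z_2(H).
  By Jacobi, [w,p] \<in> Z(H) whenever f w centralizes a and b, and
  [w,[x2,y2]] \<in> Z(H) whenever f w centralizes c and d.  Since L is spanned by a, b
  and the centralizer of {a,b}, this gives [H,p] \<subseteq> Z(H), i.e. p \<in> Z_2(H), whence
  z = f p = 0.\<close>

locale lie_alg =
  fixes sc :: "'k::field \<Rightarrow> 'v::ab_group_add \<Rightarrow> 'v" and br :: "'v \<Rightarrow> 'v \<Rightarrow> 'v"
  assumes lie_algebra: "lie_algebra sc br"
begin

sublocale vector_space sc
  using lie_algebra by (simp add: lie_algebra_def)

lemma bracket_add_left: "br (x + y) w = br x w + br y w"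
  and bracket_add_right: "br w (x + y) = br w x + br w y"
  and bracket_scale_left: "br (sc a x) y = sc a (br x y)"
  and bracket_scale_right: "br x (sc a y) = sc a (br x y)"
  and bracket_self: "br x x = 0"
  and jacobi: "br x (br y z) + br y (br z x) + br z (br x y) = 0"
  using lie_algebra by (simp_all add: lie_algebra_def)

lemma bracket_diff_left: "br (x - y) w = br x w - br y w"
  using bracket_add_left[of "x - y" y w] by (simp add: algebra_simps)

lemma bracket_diff_right: "br w (x - y) = br w x - br w y"
  using bracket_add_right[of w "x - y" y] by (simp add: algebra_simps)

lemma bracket_antisym: "br x y = - br y x"
proof -
  have "0 = br (x + y) (x + y)" by (simp add: bracket_self)
  also have "\<dots> = br x y + br y x"
    unfolding bracket_add_left bracket_add_right by (simp add: bracket_self)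
  finally have "br x y + br y x = 0" by (rule sym)
  then show ?thesis by (simp add: eq_neg_iff_add_eq_0)
qed

lemma bracket_eq_0_commute: "br x y = 0 \<longleftrightarrow> br y x = 0"
  by (subst bracket_antisym) simp

lemma subspace_center: "subspace (lie_center br)"
  unfolding subspace_def lie_center_def
  using bracket_add_left bracket_scale_left bracket_diff_left[of 0 0] by simp

lemma center2_iff: "z \<in> lie_center2 br \<longleftrightarrow> (\<forall>x. br x z \<in> lie_center br)"
proof -
  have "br z x \<in> lie_center br \<longleftrightarrow> br x z \<in> lie_center br" for x
    using bracket_antisym[of x z] bracket_antisym[of z x]
      subspace_neg[OF subspace_center, of "br x z"] subspace_neg[OF subspace_center, of "br z x"]
    by auto
  then show ?thesis by (simp add: lie_center2_def)
qed

lemma bracket_bracket_in_center: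
  assumes "br y w \<in> lie_center2 br" and "br w x \<in> lie_center2 br"
  shows "br w (br x y) \<in> lie_center br"
proof -
  have jacobi_solved: "br w (br x y) = - (br x (br y w) + br y (br w x))"
    using jacobi[of x y w] by (simp add: add_eq_0_iff2 algebra_simps)
  moreover have "br x (br y w) \<in> lie_center br" "br y (br w x) \<in> lie_center br"
    using assms center2_iff by blast+
  ultimately show ?thesis
    unfolding jacobi_solved by (intro subspace_neg[OF subspace_center] subspace_add[OF subspace_center])
qed

lemma bracket_in_derived: "br x y \<in> lie_derived sc br"
  unfolding lie_derived_def by (rule span_base) blast

lemma derived_dim_one_generator_exists:
  assumes "dim (lie_derived sc br) = 1"
  obtains a b where "br a b \<noteq> 0" and "lie_derived sc br = span {br a b}"
proof -
  let ?D = "lie_derived sc br"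
  obtain B where B: "B \<subseteq> ?D" "independent B" "?D \<subseteq> span B" "card B = dim ?D"
    by (rule basis_exists)
  with assms obtain z0 where z0: "B = {z0}" by (metis card_1_singletonE)
  with B(2) have "z0 \<noteq> 0" using dependent_zero by blast
  from B(3) z0 have D: "?D \<subseteq> range (\<lambda>k. sc k z0)" by (simp add: span_singleton)
  obtain a b where ab: "br a b \<noteq> 0"
  proof (rule ccontr)
    assume "\<not> thesis"
    with that have "{br x y | x y. True} \<subseteq> {0}" by blast
    then have "?D \<subseteq> span {0}" unfolding lie_derived_def by (rule span_mono)
    moreover have "z0 \<in> ?D" using B(1) z0 by blast
    ultimately show False using \<open>z0 \<noteq> 0\<close> by (simp add: subset_iff)
  qed
  obtain k where k: "br a b = sc k z0"
    using D bracket_in_derived by blast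
  with ab have "k \<noteq> 0" by auto
  have "?D \<subseteq> span {br a b}"
  proof
    fix x assume "x \<in> ?D"
    then obtain l where "x = sc l z0" using D by blast
    also have "\<dots> = sc (l / k) (br a b)" using k \<open>k \<noteq> 0\<close> by simp
    finally show "x \<in> span {br a b}" by (simp add: span_scale span_base)
  qed
  moreover have "span {br a b} \<subseteq> ?D"
    unfolding lie_derived_def by (rule span_mono) blast
  ultimately show thesis using ab that by blast
qed

lemma centralizing_shift_exists:
  assumes "\<And>x y. br x y \<in> span {br a b}"
  obtains \<alpha> \<beta> where "br (v - sc \<beta> a + sc \<alpha> b) a = 0" and "br (v - sc \<beta> a + sc \<alpha> b) b = 0"
proof -
  have "br v a \<in> range (\<lambda>k. sc k (br a b))" "br v b \<in> range (\<lambda>k. sc k (br a b))"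
    using assms by (simp_all add: span_singleton[symmetric])
  then obtain \<alpha> \<beta> where "br v a = sc \<alpha> (br a b)" "br v b = sc \<beta> (br a b)"
    by blast
  moreover have "br b a = - br a b" by (rule bracket_antisym)
  ultimately show thesis
    by (intro that[of \<beta> \<alpha>]) (simp_all add: bracket_add_left bracket_diff_left bracket_scale_left bracket_self)
qed

lemma commuting_pair_exists:
  assumes brackets: "\<And>x y. br x y \<in> span {br a b}"
    and center: "lie_center br \<subseteq> span {br a b}"
    and dim: "dim (UNIV :: 'v set) > 3"
  obtains c d where "br c d = br a b"
    and "br c a = 0" "br c b = 0" "br d a = 0" "br d b = 0"
proof -
  obtain u where u: "br u a = 0" "br u b = 0" "u \<notin> lie_center br"
  proof (rule ccontr)
    assume "\<not> thesis"
    with that have centralizer: "br u a = 0 \<Longrightarrow> br u b = 0 \<Longrightarrow> u \<in> lie_center br" for u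
      by blast
    have "UNIV \<subseteq> span {a, b, br a b}"
    proof
      fix v
      obtain \<alpha> \<beta> where "br (v - sc \<beta> a + sc \<alpha> b) a = 0" "br (v - sc \<beta> a + sc \<alpha> b) b = 0"
        by (rule centralizing_shift_exists[OF brackets])
      then have "v - sc \<beta> a + sc \<alpha> b \<in> span {br a b}"
        using centralizer center by blast
      then have "v - sc \<beta> a + sc \<alpha> b \<in> span {a, b, br a b}"
        using span_mono[of "{br a b}" "{a, b, br a b}"] by blast
      moreover have "sc \<beta> a - sc \<alpha> b \<in> span {a, b, br a b}"
        by (intro span_diff span_scale span_base) auto
      ultimately have "(v - sc \<beta> a + sc \<alpha> b) + (sc \<beta> a - sc \<alpha> b) \<in> span {a, b, br a b}"
        by (rule span_add)
      then show "v \<in> span {a, b, br a b}" by simp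
    qed
    then have "dim (UNIV :: 'v set) \<le> card {a, b, br a b}"
      by (intro dim_le_card) auto
    also have "\<dots> \<le> 3" by (simp add: card_insert_le_m1)
    finally show False using dim by simp
  qed
  obtain v where "br u v \<noteq> 0" using u(3) by (auto simp: lie_center_def)
  obtain \<alpha> \<beta> where v': "br (v - sc \<beta> a + sc \<alpha> b) a = 0" "br (v - sc \<beta> a + sc \<alpha> b) b = 0"
    by (rule centralizing_shift_exists[OF brackets])
  have "br u v \<in> range (\<lambda>k. sc k (br a b))"
    using brackets by (simp add: span_singleton[symmetric])
  then obtain \<mu> where \<mu>: "br u v = sc \<mu> (br a b)" by blast
  with \<open>br u v \<noteq> 0\<close> have "\<mu> \<noteq> 0" by auto
  have "br u (v - sc \<beta> a + sc \<alpha> b) = br u v"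
    using u by (simp add: bracket_add_right bracket_diff_right bracket_scale_right)
  then show thesis
    using u v' \<mu> \<open>\<mu> \<noteq> 0\<close>
    by (intro that[of u "sc (1 / \<mu>) (v - sc \<beta> a + sc \<alpha> b)"])
      (simp_all add: bracket_scale_left bracket_scale_right)
qed

end

lemma two_capable_witness_bracket_eq_0:
  assumes witness: "two_capable_witness scH brH scL brL f"
    and L: "lie_algebra scL brL"
    and cd: "brL c d = brL a b"
    and commute: "brL c a = 0" "brL c b = 0" "brL d a = 0" "brL d b = 0"
    and brackets: "\<And>x y. brL x y \<in> module.span scL {brL a b}"
  shows "brL a b = 0"
proof -
  interpret L: lie_alg scL brL by (rule lie_alg.intro) (rule L)
  interpret H: lie_alg scH brH using witness by (simp add: lie_alg_def two_capable_witness_def)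
  interpret f: Vector_Spaces.linear scH scL f
    using witness by (simp add: two_capable_witness_def lie_hom_def)
  have f_bracket: "f (brH x y) = brL (f x) (f y)" for x y
    using witness by (simp add: two_capable_witness_def lie_hom_def)
  have Z2_iff: "h \<in> lie_center2 brH \<longleftrightarrow> f h = 0" for h
    using witness by (auto simp: two_capable_witness_def)
  obtain x1 y1 x2 y2 where lifts: "f x1 = a" "f y1 = b" "f x2 = c" "f y2 = d"
    using witness unfolding two_capable_witness_def by (metis surjD)
  define p where "p = brH x1 y1"
  have "f (p - brH x2 y2) = 0"
    using lifts cd by (simp add: p_def f.diff f_bracket)
  then have p_shift: "brH w p - brH w (brH x2 y2) \<in> lie_center brH" for w
    unfolding H.bracket_diff_right[symmetric] using Z2_iff H.center2_iff by blast
  have ad_p_ab: "brH w p \<in> lie_center brH" if "brL (f w) a = 0" "brL (f w) b = 0" for w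
    unfolding p_def using that lifts
    by (intro H.bracket_bracket_in_center) (simp_all add: Z2_iff f_bracket L.bracket_eq_0_commute)
  have ad_p_cd: "brH w p \<in> lie_center brH" if "brL (f w) c = 0" "brL (f w) d = 0" for w
  proof -
    have "brH w (brH x2 y2) \<in> lie_center brH"
      using that lifts
      by (intro H.bracket_bracket_in_center) (simp_all add: Z2_iff f_bracket L.bracket_eq_0_commute)
    from H.subspace_add[OF H.subspace_center p_shift[of w] this] show ?thesis by simp
  qed
  have "brH w p \<in> lie_center brH" for w
  proof -
    obtain \<alpha> \<beta> where "brL (f w - scL \<beta> a + scL \<alpha> b) a = 0" "brL (f w - scL \<beta> a + scL \<alpha> b) b = 0"
      by (rule L.centralizing_shift_exists[OF brackets])
    then have "brH (w - scH \<beta> x1 + scH \<alpha> y1) p \<in> lie_center brH"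
      using lifts by (intro ad_p_ab) (simp_all add: f.add f.diff f.scale)
    moreover have "brH x1 p \<in> lie_center brH" "brH y1 p \<in> lie_center brH"
      using lifts commute by (intro ad_p_cd; simp add: L.bracket_eq_0_commute)+
    moreover have "brH w p = brH (w - scH \<beta> x1 + scH \<alpha> y1) p + scH \<beta> (brH x1 p) - scH \<alpha> (brH y1 p)"
      by (simp add: H.bracket_add_left H.bracket_diff_left H.bracket_scale_left)
    ultimately show ?thesis
      by (simp only:) (intro H.subspace_diff[OF H.subspace_center] H.subspace_add[OF H.subspace_center]
          H.subspace_scale[OF H.subspace_center])
  qed
  then have "f p = 0" using Z2_iff H.center2_iff by blast
  then show ?thesis using lifts by (simp add: p_def f_bracket)
qed

theorem corollary2p9:
  fixes scL :: "'k::field \<Rightarrow> 'v::ab_group_add \<Rightarrow> 'v"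
    and brL :: "'v \<Rightarrow> 'v \<Rightarrow> 'v"
    and scH :: "'k \<Rightarrow> 'h::ab_group_add \<Rightarrow> 'h"
    and brH :: "'h \<Rightarrow> 'h \<Rightarrow> 'h"
    and f :: "'h \<Rightarrow> 'v"
    and m :: nat
  assumes "m \<ge> 2"
    and "lie_algebra scL brL"
    and "vector_space.dim scL (UNIV :: 'v set) = 2 * m + 1"
    and "lie_derived scL brL = lie_center brL"
    and "vector_space.dim scL (lie_derived scL brL) = 1"
  shows "\<not> two_capable_witness scH brH scL brL f"
proof
  assume witness: "two_capable_witness scH brH scL brL f"
  interpret L: lie_alg scL brL by (rule lie_alg.intro) (rule assms(2))
  obtain a b where "brL a b \<noteq> 0" and derived: "lie_derived scL brL = L.span {brL a b}"
    using assms(5) by (rule L.derived_dim_one_generator_exists)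
  then have brackets: "brL x y \<in> L.span {brL a b}" for x y
    using L.bracket_in_derived by blast
  moreover have "lie_center brL \<subseteq> L.span {brL a b}" using derived assms(4) by simp
  moreover have "L.dim (UNIV :: 'v set) > 3" using assms(1,3) by simp
  ultimately obtain c d where "brL c d = brL a b"
    and "brL c a = 0" "brL c b = 0" "brL d a = 0" "brL d b = 0"
    by (rule L.commuting_pair_exists)
  then have "brL a b = 0"
    using brackets by (rule two_capable_witness_bracket_eq_0[OF witness assms(2)])
  with \<open>brL a b \<noteq> 0\<close> show False ..
qed

end
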